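(* Let $p,q,l\in\mathbb N$ with $l\le p+q$. Let $S$ be the set of subsets of $\{1,\dots,p+q\}$ of cardinality $l$, and $S^+=\{I\in S:\#(I\cap\{1,\dots,p\})=\min\{p,l\}\}$. For $z_1,\dots,z_{p+q}\in\mathbb R^l$ and $I=\{i_1<\dots<i_l\}$ write $z_I=\det(z_{i_1},\dots,z_{i_l})$ (the determinant of the matrix with these columns). For $\theta\in M_{p\times q}(\mathbb R)$ set $z_i^\theta=z_i+\sum_{j=1}^q\theta_{ij}z_{p+j}$ for $i\le p$, $z_i^\theta=z_i$ for $i>p$, and $z_I^\theta=\det(z^\theta_{i_1},\dots,z^\theta_{i_l})$. Let $F$ be a set and for each $\rho\in F$ let $\nu^\rho=\prod_{1\le i\le p,1\le j\le q}\nu^\rho_{ij}$ be a product of Borel measures on $\mathbb R$ (viewed as a measure on $M_{p\times q}(\mathbb R)$). Assume there are constants $\lambda,C_1,C_2>0$ such that for all $i,j$, all $\rho\in F$, all $x\in\mathbb R$ and $y>0$: $\nu^\rho_{ij}([x-y,x+y])\le C_1y^\lambda$ and $\mathrm{supp}(\nu^\rho_{ij})\subset[-C_2,C_2]$. Then there exist constants $C_3>0$ and $\delta>0$ such that for all $z_1,\dots,z_{p+q}\in\mathbb R^l$ with $\max\{|z_I|:I\in S\}=1$, all $\rho\in F$ and all $0<\varepsilon<1$, $$\nu^\rho\big(\{\theta\in M_{p\times q}(\mathbb R):\max\{|z_I^\theta|:I\in S^+\}\le\varepsilon\}\big)\le C_3\varepsilon^\delta.$$ *)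

theory Defs
  imports "HOL-Probability.Probability" "Jordan_Normal_Form.Determinant"
begin

text \<open>Vectors of R^l are represented as functions nat => real, only the
components 0..<l matter.\<close>

definition zdet :: "nat \<Rightarrow> (nat \<Rightarrow> nat \<Rightarrow> real) \<Rightarrow> nat set \<Rightarrow> real" where
  "zdet l z I = Determinant.det (mat l l (\<lambda>(r, c). z (sorted_list_of_set I ! c) r))"

definition ztheta :: "nat \<Rightarrow> nat \<Rightarrow> (nat \<times> nat \<Rightarrow> real) \<Rightarrow> (nat \<Rightarrow> nat \<Rightarrow> real) \<Rightarrow> nat \<Rightarrow> nat \<Rightarrow> real" where
  "ztheta p q \<theta> z i = (if 1 \<le> i \<and> i \<le> p
      then (\<lambda>r. z i r + (\<Sum>j = 1..q. \<theta> (i, j) * z (p + j) r))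
      else z i)"

definition Sset :: "nat \<Rightarrow> nat \<Rightarrow> nat \<Rightarrow> nat set set" where
  "Sset p q l = {I. I \<subseteq> {1..p+q} \<and> card I = l}"

definition Splus :: "nat \<Rightarrow> nat \<Rightarrow> nat \<Rightarrow> nat set set" where
  "Splus p q l = {I \<in> Sset p q l. card (I \<inter> {1..p}) = min p l}"

end

theory Submission
  imports Defs
begin

text \<open>Each coordinate z_I(\<theta>) is a multiaffine function of the entries of \<theta>, so it
  suffices to show that a multiaffine P with \<bar>P\<bar> \<ge> 1 at some vertex of the cube {0,1}^K has
  sublevel sets {\<bar>P\<bar> \<le> \<epsilon>} of measure O(\<epsilon>^\<delta>) under any product of Frostman measures. By
  induction on K: write P = B + y A in one variable y. For fixed remaining variables the set
  {y. \<bar>B + y A\<bar> \<le> \<epsilon>} has measure O(\<epsilon>^(\<lambda>/2)) unless \<bar>A\<bar> and \<bar>B\<bar> are both O(sqrt \<epsilon>);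
  since one of A, B is at least 1/2 at a vertex, the induction hypothesis bounds the measure of
  that exceptional set by O(\<epsilon>^(\<delta>/2)).

  To find the vertex, start from J with \<bar>z_J\<bar> = 1 and exchange indices of J beyond p for
  missing indices in {1..p}, obtaining I \<in> S+. Switching on the entry of \<theta> that adds the
  removed vector to the new one makes z_I(\<theta>) multiaffine in the switches with top
  coefficient \<plusminus>z_J, hence some choice of switches gives \<bar>z_I(\<theta>)\<bar> \<ge> 2^-l.\<close>

definition frostman_measure :: "real \<Rightarrow> real \<Rightarrow> real \<Rightarrow> real measure \<Rightarrow> bool" where
  "frostman_measure lam C1 C2 m \<longleftrightarrow> sets m = sets borel \<and>
    (\<forall>x y. y > 0 \<longrightarrow> emeasure m {x - y..x + y} \<le> ennreal (C1 * y powr lam)) \<and>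
    emeasure m (UNIV - {-C2..C2}) = 0"

lemma frostman_measure_space: "frostman_measure lam C1 C2 m \<Longrightarrow> space m = UNIV"
  unfolding frostman_measure_def by (metis sets_eq_imp_space_eq space_borel)

lemma frostman_measure_le:
  assumes m: "frostman_measure lam C1 C2 m" and "C2 > 0"
  shows "emeasure m A \<le> ennreal (C1 * C2 powr lam)"
proof -
  have sets: "sets m = sets borel" and sp: "space m = UNIV"
    using m frostman_measure_space unfolding frostman_measure_def by auto
  have "emeasure m A \<le> emeasure m (space m)" by (rule emeasure_space)
  also have "\<dots> \<le> emeasure m {-C2..C2} + emeasure m (UNIV - {-C2..C2})"
    using emeasure_subadditive[of "{-C2..C2}" m "UNIV - {-C2..C2}"] sets sp by auto
  also have "\<dots> = emeasure m {0 - C2..0 + C2}" using m unfolding frostman_measure_def by simp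
  also have "\<dots> \<le> ennreal (C1 * C2 powr lam)" using m assms(2) unfolding frostman_measure_def by blast
  finally show ?thesis .
qed

lemma product_sigma_finite_frostman:
  assumes "\<And>k. frostman_measure lam C1 C2 (\<nu> k)" "C2 > 0"
  shows "product_sigma_finite \<nu>"
  unfolding product_sigma_finite_def
proof
  fix k
  show "sigma_finite_measure (\<nu> k)"
    using frostman_measure_le[OF assms(1,2), of k "space (\<nu> k)"]
    by (intro finite_measure.axioms(1) finite_measureI) (auto simp: top_unique)
qed

lemma emeasure_PiM_frostman_le:
  assumes \<nu>: "\<And>k. frostman_measure lam C1 C2 (\<nu> k)" and "C1 > 0" "C2 > 0" "finite K"
  shows "emeasure (PiM K \<nu>) A \<le> ennreal ((C1 * C2 powr lam) ^ card K)"
proof -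
  interpret product_sigma_finite \<nu> using product_sigma_finite_frostman[OF \<nu> \<open>C2 > 0\<close>] .
  have "emeasure (PiM K \<nu>) A \<le> emeasure (PiM K \<nu>) (space (PiM K \<nu>))" by (rule emeasure_space)
  also have "\<dots> = (\<Prod>i\<in>K. emeasure (\<nu> i) (space (\<nu> i)))"
    unfolding space_PiM using emeasure_PiM[OF \<open>finite K\<close>] by simp
  also have "\<dots> \<le> (\<Prod>i\<in>K. ennreal (C1 * C2 powr lam))"
    by (intro prod_mono_ennreal frostman_measure_le \<nu> \<open>C2 > 0\<close>)
  also have "\<dots> = ennreal ((C1 * C2 powr lam) ^ card K)"
    using assms by (simp add: prod_ennreal ennreal_power)
  finally show ?thesis .
qed

lemma emeasure_PiM_frostman_le_powr:
  assumes "\<And>k. frostman_measure lam C1 C2 (\<nu> k)" "C1 > 0" "C2 > 0" "finite K"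
    and "(C1 * C2 powr lam) ^ card K \<le> C" "1 \<le> \<epsilon>" "0 \<le> \<delta>"
  shows "emeasure (PiM K \<nu>) A \<le> ennreal (C * \<epsilon> powr \<delta>)"
proof -
  have "0 \<le> (C1 * C2 powr lam) ^ card K" using assms(2) by simp
  then have "C * 1 \<le> C * \<epsilon> powr \<delta>"
    using assms(5-7) ge_one_powr_ge_zero by (intro mult_left_mono) auto
  with assms(5) have "(C1 * C2 powr lam) ^ card K \<le> C * \<epsilon> powr \<delta>" by simp
  then show ?thesis by (rule order.trans[OF emeasure_PiM_frostman_le[OF assms(1-4)] ennreal_leI])
qed

definition multiaffine :: "'k set \<Rightarrow> (('k \<Rightarrow> real) \<Rightarrow> real) \<Rightarrow> bool" where
  "multiaffine K P \<longleftrightarrow>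
     (\<forall>k\<in>K. \<forall>\<theta> y. P (\<theta>(k := y)) = P (\<theta>(k := 0)) + y * (P (\<theta>(k := 1)) - P (\<theta>(k := 0))))"

lemma multiaffineI:
  assumes "\<And>k \<theta>. k \<in> K \<Longrightarrow> \<exists>W. \<forall>t. P (\<theta>(k := t)) = P (\<theta>(k := 0)) + t * W"
  shows "multiaffine K P"
  unfolding multiaffine_def
proof (intro ballI allI)
  fix k \<theta> y assume "k \<in> K"
  then obtain W where W: "\<And>t. P (\<theta>(k := t)) = P (\<theta>(k := 0)) + t * W" using assms by blast
  show "P (\<theta>(k := y)) = P (\<theta>(k := 0)) + y * (P (\<theta>(k := 1)) - P (\<theta>(k := 0)))"
    using W[of y] W[of 1] by simp
qed

lemma multiaffine_lincomb:
  assumes "multiaffine K f" "multiaffine K g"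
  shows "multiaffine K (\<lambda>x. a * f x + b * g x)"
  unfolding multiaffine_def
proof (intro ballI allI)
  fix k \<theta> y assume "k \<in> K"
  then have f: "f (\<theta>(k := y)) = f (\<theta>(k := 0)) + y * (f (\<theta>(k := 1)) - f (\<theta>(k := 0)))"
    and g: "g (\<theta>(k := y)) = g (\<theta>(k := 0)) + y * (g (\<theta>(k := 1)) - g (\<theta>(k := 0)))"
    using assms unfolding multiaffine_def by blast+
  show "a * f (\<theta>(k := y)) + b * g (\<theta>(k := y)) =
      a * f (\<theta>(k := 0)) + b * g (\<theta>(k := 0)) +
      y * (a * f (\<theta>(k := 1)) + b * g (\<theta>(k := 1)) - (a * f (\<theta>(k := 0)) + b * g (\<theta>(k := 0))))"
    unfolding f g by (simp add: algebra_simps)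
qed

lemma multiaffine_fun_upd:
  assumes "multiaffine (insert k K) P" "k \<notin> K"
  shows "multiaffine K (\<lambda>x. P (x(k := t)))"
  unfolding multiaffine_def
proof (intro ballI allI)
  fix j \<theta> y assume j: "j \<in> K"
  then have "P ((\<theta>(k := t))(j := y)) =
      P ((\<theta>(k := t))(j := 0)) + y * (P ((\<theta>(k := t))(j := 1)) - P ((\<theta>(k := t))(j := 0)))"
    using assms(1) unfolding multiaffine_def by blast
  moreover have "j \<noteq> k" using j assms(2) by auto
  ultimately show "P (\<theta>(j := y, k := t)) =
      P (\<theta>(j := 0, k := t)) + y * (P (\<theta>(j := 1, k := t)) - P (\<theta>(j := 0, k := t)))"
    by (simp add: fun_upd_twist)
qed

lemma measurable_PiM_fun_upd_comp:
  assumes "P \<in> borel_measurable (PiM (insert k K) \<nu>)" "c \<in> space (\<nu> k)"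
  shows "(\<lambda>x. P (x(k := c))) \<in> borel_measurable (PiM K \<nu>)"
proof -
  have "(\<lambda>x. x(k := c)) \<in> measurable (PiM K \<nu>) (PiM (insert k K) \<nu>)"
    by (rule measurable_fun_upd[where J = K]) (use assms(2) in auto)
  from measurable_comp[OF this assms(1)] show ?thesis by (simp add: comp_def)
qed

lemma (in product_sigma_finite) emeasure_PiM_insert_le:
  assumes "finite K" "k \<notin> K" "X \<in> sets (PiM (insert k K) M)" "D \<in> sets (PiM K M)"
    and fiber: "\<And>x. x \<in> space (PiM K M) \<Longrightarrow>
      (\<integral>\<^sup>+y. indicator X (x(k := y)) \<partial>M k) \<le> c + d * indicator D x"
  shows "emeasure (PiM (insert k K) M) X \<le>
    c * emeasure (PiM K M) (space (PiM K M)) + d * emeasure (PiM K M) D"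
proof -
  have "emeasure (PiM (insert k K) M) X = (\<integral>\<^sup>+\<theta>. indicator X \<theta> \<partial>PiM (insert k K) M)"
    using assms(3) by simp
  also have "\<dots> = (\<integral>\<^sup>+x. (\<integral>\<^sup>+y. indicator X (x(k := y)) \<partial>M k) \<partial>PiM K M)"
    by (rule product_nn_integral_insert[OF assms(1,2)]) (use assms(3) in measurable)
  also have "\<dots> \<le> (\<integral>\<^sup>+x. (c + d * indicator D x) \<partial>PiM K M)"
    by (rule nn_integral_mono) (rule fiber)
  also have "\<dots> = (\<integral>\<^sup>+x. c \<partial>PiM K M) + (\<integral>\<^sup>+x. d * indicator D x \<partial>PiM K M)"
    by (rule nn_integral_add) (use assms(4) in auto)
  also have "\<dots> = c * emeasure (PiM K M) (space (PiM K M)) + d * emeasure (PiM K M) D"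
    using assms(4) by (simp add: nn_integral_cmult_indicator)
  finally show ?thesis .
qed

lemma frostman_affine_sublevel_steep:
  assumes m: "frostman_measure lam C1 C2 m" and "a \<noteq> 0" "\<epsilon> > 0"
  shows "emeasure m {y. \<bar>b + y * a\<bar> \<le> \<epsilon>} \<le> ennreal (C1 * (\<epsilon> / \<bar>a\<bar>) powr lam)"
proof -
  define x0 where "x0 = - b / a"
  have "{y. \<bar>b + y * a\<bar> \<le> \<epsilon>} \<subseteq> {x0 - \<epsilon> / \<bar>a\<bar>..x0 + \<epsilon> / \<bar>a\<bar>}"
  proof
    fix y assume "y \<in> {y. \<bar>b + y * a\<bar> \<le> \<epsilon>}"
    moreover have "\<bar>y - x0\<bar> = \<bar>b + y * a\<bar> / \<bar>a\<bar>"
      using \<open>a \<noteq> 0\<close> by (simp add: x0_def field_simps flip: abs_divide)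
    ultimately have "\<bar>y - x0\<bar> \<le> \<epsilon> / \<bar>a\<bar>" by (simp add: divide_right_mono)
    then show "y \<in> {x0 - \<epsilon> / \<bar>a\<bar>..x0 + \<epsilon> / \<bar>a\<bar>}" by (auto simp: abs_le_iff)
  qed
  then have "emeasure m {y. \<bar>b + y * a\<bar> \<le> \<epsilon>} \<le> emeasure m {x0 - \<epsilon> / \<bar>a\<bar>..x0 + \<epsilon> / \<bar>a\<bar>}"
    using m by (intro emeasure_mono) (auto simp: frostman_measure_def)
  also have "\<dots> \<le> ennreal (C1 * (\<epsilon> / \<bar>a\<bar>) powr lam)"
    using m assms(2,3) unfolding frostman_measure_def by simp
  finally show ?thesis .
qed

lemma frostman_affine_sublevel_flat:
  assumes m: "frostman_measure lam C1 C2 m" and "\<bar>a\<bar> \<le> s" "\<epsilon> + C2 * s < \<bar>b\<bar>" "C2 \<ge> 0"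
  shows "emeasure m {y. \<bar>b + y * a\<bar> \<le> \<epsilon>} = 0"
proof -
  have "{y. \<bar>b + y * a\<bar> \<le> \<epsilon>} \<subseteq> UNIV - {-C2..C2}"
  proof (intro subsetI DiffI UNIV_I notI)
    fix y assume "y \<in> {y. \<bar>b + y * a\<bar> \<le> \<epsilon>}" "y \<in> {-C2..C2}"
    then have "\<bar>b + y * a\<bar> \<le> \<epsilon>" "\<bar>y\<bar> * \<bar>a\<bar> \<le> C2 * s"
      using assms(2,4) by (auto intro!: mult_mono)
    then show False using assms(3) by (simp only: abs_mult[symmetric])
  qed
  then have "emeasure m {y. \<bar>b + y * a\<bar> \<le> \<epsilon>} \<le> emeasure m (UNIV - {-C2..C2})"
    using m by (intro emeasure_mono) (auto simp: frostman_measure_def)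
  then show ?thesis using m by (simp add: frostman_measure_def)
qed

lemma frostman_affine_sublevel:
  assumes m: "frostman_measure lam C1 C2 m" and "C1 > 0" "C2 > 0" "lam > 0" "0 < \<epsilon>" "\<epsilon> \<le> 1"
  shows "emeasure m {y. \<bar>b + y * a\<bar> \<le> \<epsilon>} \<le> ennreal (C1 * \<epsilon> powr (lam / 2)) +
    (if \<bar>a\<bar> \<le> (1 + C2) * sqrt \<epsilon> \<and> \<bar>b\<bar> \<le> (1 + C2) * sqrt \<epsilon>
     then ennreal (C1 * C2 powr lam) else 0)"
proof -
  have "\<epsilon> \<le> sqrt \<epsilon>"
    using assms(5,6) by (simp add: real_le_rsqrt power2_eq_square mult_le_cancel_left1)
  then have "sqrt \<epsilon> \<le> (1 + C2) * sqrt \<epsilon>" "\<epsilon> + C2 * sqrt \<epsilon> \<le> (1 + C2) * sqrt \<epsilon>"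
    using assms(3,5) by (auto simp: algebra_simps)
  then consider "\<bar>a\<bar> > sqrt \<epsilon>" | "\<bar>a\<bar> \<le> sqrt \<epsilon>" "\<bar>b\<bar> > \<epsilon> + C2 * sqrt \<epsilon>"
    | "\<bar>a\<bar> \<le> (1 + C2) * sqrt \<epsilon>" "\<bar>b\<bar> \<le> (1 + C2) * sqrt \<epsilon>"
    by linarith
  then show ?thesis
  proof cases
    case 1
    have "0 < sqrt \<epsilon>" using assms(5) by simp
    moreover have "0 < \<bar>a\<bar>" using 1 calculation by linarith
    ultimately have "0 < \<bar>a\<bar> * sqrt \<epsilon>" by simp
    then have "\<epsilon> / \<bar>a\<bar> \<le> \<epsilon> / sqrt \<epsilon>"
      using 1 assms(5) by (intro divide_left_mono) auto
    also have "\<dots> = sqrt \<epsilon>" using assms(5) by (simp add: real_div_sqrt)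
    finally have "(\<epsilon> / \<bar>a\<bar>) powr lam \<le> sqrt \<epsilon> powr lam"
      using 1 assms(4,5) by (intro powr_mono2) auto
    also have "sqrt \<epsilon> powr lam = \<epsilon> powr (lam / 2)"
      using assms(5) by (simp add: powr_half_sqrt[symmetric] powr_powr)
    finally have "ennreal (C1 * (\<epsilon> / \<bar>a\<bar>) powr lam) \<le> ennreal (C1 * \<epsilon> powr (lam / 2))"
      using assms(2) by (intro ennreal_leI) simp
    moreover have "a \<noteq> 0" using \<open>0 < \<bar>a\<bar>\<close> by simp
    ultimately have "emeasure m {y. \<bar>b + y * a\<bar> \<le> \<epsilon>} \<le> ennreal (C1 * \<epsilon> powr (lam / 2))"
      using frostman_affine_sublevel_steep[OF m _ assms(5), of a b] by (blast intro: order.trans)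
    then show ?thesis by (rule order.trans) simp
  next
    case 2
    then show ?thesis using frostman_affine_sublevel_flat[OF m, of a "sqrt \<epsilon>" \<epsilon> b] assms(3) by simp
  next
    case 3
    then show ?thesis using frostman_measure_le[OF m assms(3)] by (simp add: add_increasing)
  qed
qed
definition multiaffine_anticoncentration ::
    "'k set \<Rightarrow> real \<Rightarrow> real \<Rightarrow> real \<Rightarrow> real \<Rightarrow> real \<Rightarrow> bool" where
  "multiaffine_anticoncentration K lam C1 C2 C \<delta> \<longleftrightarrow>
     (\<forall>\<nu> P \<epsilon>. (\<forall>k. frostman_measure lam C1 C2 (\<nu> k)) \<longrightarrow>
       P \<in> borel_measurable (PiM K \<nu>) \<longrightarrow> multiaffine K P \<longrightarrow>
       (\<exists>\<theta>0 \<in> PiE K (\<lambda>_. {0, 1}). 1 \<le> \<bar>P \<theta>0\<bar>) \<longrightarrow> \<epsilon> > 0 \<longrightarrow>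
       emeasure (PiM K \<nu>) {\<theta> \<in> space (PiM K \<nu>). \<bar>P \<theta>\<bar> \<le> \<epsilon>} \<le> ennreal (C * \<epsilon> powr \<delta>))"

lemma multiaffine_anticoncentration_empty:
  assumes "C1 > 0" "C2 > 0"
  shows "multiaffine_anticoncentration {} lam C1 C2 1 1"
  unfolding multiaffine_anticoncentration_def
proof (intro allI impI)
  fix \<nu> :: "'k \<Rightarrow> real measure" and P :: "('k \<Rightarrow> real) \<Rightarrow> real" and \<epsilon> :: real
  assume \<nu>: "\<forall>k. frostman_measure lam C1 C2 (\<nu> k)"
    and corner: "\<exists>\<theta>0 \<in> PiE {} (\<lambda>_. {0, 1}). 1 \<le> \<bar>P \<theta>0\<bar>" and "\<epsilon> > 0"
  show "emeasure (PiM {} \<nu>) {\<theta> \<in> space (PiM {} \<nu>). \<bar>P \<theta>\<bar> \<le> \<epsilon>} \<le> ennreal (1 * \<epsilon> powr 1)"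
  proof (cases "\<epsilon> < 1")
    case True
    have "{\<theta> \<in> space (PiM {} \<nu>). \<bar>P \<theta>\<bar> \<le> \<epsilon>} = {}"
      using corner True by (auto simp: PiM_empty)
    then show ?thesis by (metis emeasure_empty zero_le)
  next
    case False
    then show ?thesis
      using emeasure_PiM_frostman_le_powr[of lam C1 C2 \<nu> "{}" 1 \<epsilon> 1] \<nu> assms by simp
  qed
qed

lemma multiaffine_anticoncentration_coefficients:
  fixes K :: "'k set"
  assumes AC: "multiaffine_anticoncentration K lam C1 C2 C \<delta>" and "k \<notin> K"
    and \<nu>: "\<forall>k. frostman_measure lam C1 C2 (\<nu> k)"
    and Pm: "P \<in> borel_measurable (PiM (insert k K) \<nu>)" and P: "multiaffine (insert k K) P"
    and corner: "\<exists>\<theta>0 \<in> PiE (insert k K) (\<lambda>_. {0, 1}). 1 \<le> \<bar>P \<theta>0\<bar>" and "a > 0"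
  shows "emeasure (PiM K \<nu>)
      {x \<in> space (PiM K \<nu>). \<bar>P (x(k := 1)) - P (x(k := 0))\<bar> \<le> a \<and> \<bar>P (x(k := 0))\<bar> \<le> a}
    \<le> ennreal (C * (2 * a) powr \<delta>)"
proof -
  define A where "A x = P (x(k := 1)) - P (x(k := 0))" for x
  define B where "B x = P (x(k := 0))" for x
  have sp: "space (\<nu> k) = UNIV" using \<nu> frostman_measure_space by blast
  have "(\<lambda>x. P (x(k := c))) \<in> borel_measurable (PiM K \<nu>)" for c
    using measurable_PiM_fun_upd_comp[OF Pm] sp by simp
  then have Am: "A \<in> borel_measurable (PiM K \<nu>)" and Bm: "B \<in> borel_measurable (PiM K \<nu>)"
    unfolding A_def B_def by auto
  have mA: "multiaffine K (\<lambda>x. 2 * A x)"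
    using multiaffine_lincomb[OF multiaffine_fun_upd[OF P \<open>k \<notin> K\<close>, of 1]
        multiaffine_fun_upd[OF P \<open>k \<notin> K\<close>, of 0], where a = 2 and b = "-2"]
    by (simp add: A_def algebra_simps)
  have mB: "multiaffine K (\<lambda>x. 2 * B x)"
    using multiaffine_lincomb[OF multiaffine_fun_upd[OF P \<open>k \<notin> K\<close>, of 0]
        multiaffine_fun_upd[OF P \<open>k \<notin> K\<close>, of 0], where a = 2 and b = 0]
    by (simp add: B_def)
  obtain \<theta>0 where \<theta>0: "\<theta>0 \<in> PiE (insert k K) (\<lambda>_. {0, 1})" "1 \<le> \<bar>P \<theta>0\<bar>"
    using corner by blast
  define \<theta>1 where "\<theta>1 = \<theta>0(k := undefined)"
  have \<theta>1: "\<theta>1 \<in> PiE K (\<lambda>_. {0, 1})"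
    using \<theta>0(1) \<open>k \<notin> K\<close> by (auto simp: \<theta>1_def PiE_iff extensional_def)
  have "P \<theta>0 = B \<theta>1 + \<theta>0 k * A \<theta>1"
    using P \<theta>0(1) unfolding multiaffine_def A_def B_def \<theta>1_def
    by (metis fun_upd_triv fun_upd_upd insertI1)
  moreover have "\<theta>0 k = 0 \<or> \<theta>0 k = 1" using \<theta>0(1) by (auto simp: PiE_iff)
  ultimately have "P \<theta>0 = B \<theta>1 \<or> P \<theta>0 = B \<theta>1 + A \<theta>1" by auto
  then have "1 \<le> \<bar>2 * A \<theta>1\<bar> \<or> 1 \<le> \<bar>2 * B \<theta>1\<bar>" using \<theta>0(2) by arith
  then obtain F where F: "F = A \<or> F = B" "1 \<le> \<bar>2 * F \<theta>1\<bar>" "multiaffine K (\<lambda>x. 2 * F x)"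
    using mA mB by blast
  have Fm: "(\<lambda>x. 2 * F x) \<in> borel_measurable (PiM K \<nu>)" using F(1) Am Bm by auto
  have "emeasure (PiM K \<nu>) {x \<in> space (PiM K \<nu>). \<bar>A x\<bar> \<le> a \<and> \<bar>B x\<bar> \<le> a}
      \<le> emeasure (PiM K \<nu>) {x \<in> space (PiM K \<nu>). \<bar>2 * F x\<bar> \<le> 2 * a}"
    using F(1) Fm by (intro emeasure_mono) auto
  also have "\<dots> \<le> ennreal (C * (2 * a) powr \<delta>)"
    by (rule AC[unfolded multiaffine_anticoncentration_def, rule_format])
      (use \<nu> Fm F(2,3) \<theta>1 \<open>a > 0\<close> in auto)
  finally show ?thesis unfolding A_def B_def .
qed
lemma multiaffine_fiber_sublevel:
  assumes \<nu>: "\<forall>k. frostman_measure lam C1 C2 (\<nu> k)" and "C1 > 0" "C2 > 0" "lam > 0"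
    and P: "multiaffine (insert k K) P" and "0 < \<epsilon>" "\<epsilon> \<le> 1" and x: "x \<in> space (PiM K \<nu>)"
  defines "a \<equiv> (1 + C2) * sqrt \<epsilon>"
  shows "(\<integral>\<^sup>+y. indicator {\<theta> \<in> space (PiM (insert k K) \<nu>). \<bar>P \<theta>\<bar> \<le> \<epsilon>} (x(k := y)) \<partial>\<nu> k)
    \<le> ennreal (C1 * \<epsilon> powr (lam / 2)) + ennreal (C1 * C2 powr lam) *
      indicator {x \<in> space (PiM K \<nu>). \<bar>P (x(k := 1)) - P (x(k := 0))\<bar> \<le> a \<and> \<bar>P (x(k := 0))\<bar> \<le> a} x"
proof -
  let ?A = "P (x(k := 1)) - P (x(k := 0))" and ?B = "P (x(k := 0))"
  have "x(k := y) \<in> {\<theta> \<in> space (PiM (insert k K) \<nu>). \<bar>P \<theta>\<bar> \<le> \<epsilon>} \<longleftrightarrow>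
      y \<in> {y. \<bar>?B + y * ?A\<bar> \<le> \<epsilon>}" for y
  proof -
    have "P (x(k := y)) = ?B + y * ?A" using P unfolding multiaffine_def by blast
    moreover have "space (\<nu> k) = UNIV" using \<nu> frostman_measure_space by blast
    then have "x(k := y) \<in> space (PiM (insert k K) \<nu>)" using x by (auto simp: space_PiM PiE_iff)
    ultimately show ?thesis by simp
  qed
  then have "(\<integral>\<^sup>+y. indicator {\<theta> \<in> space (PiM (insert k K) \<nu>). \<bar>P \<theta>\<bar> \<le> \<epsilon>} (x(k := y)) \<partial>\<nu> k)
      = (\<integral>\<^sup>+y. indicator {y. \<bar>?B + y * ?A\<bar> \<le> \<epsilon>} y \<partial>\<nu> k)"
    by (intro nn_integral_cong) (simp only: indicator_def)
  also have "\<dots> = emeasure (\<nu> k) {y. \<bar>?B + y * ?A\<bar> \<le> \<epsilon>}"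
    using \<nu> by (intro nn_integral_indicator) (simp add: frostman_measure_def)
  also have "\<dots> \<le> ennreal (C1 * \<epsilon> powr (lam / 2)) +
      (if \<bar>?A\<bar> \<le> a \<and> \<bar>?B\<bar> \<le> a then ennreal (C1 * C2 powr lam) else 0)"
    unfolding a_def by (rule frostman_affine_sublevel) (use assms in auto)
  also have "\<dots> = ennreal (C1 * \<epsilon> powr (lam / 2)) + ennreal (C1 * C2 powr lam) * indicator
      {x' \<in> space (PiM K \<nu>). \<bar>P (x'(k := 1)) - P (x'(k := 0))\<bar> \<le> a \<and> \<bar>P (x'(k := 0))\<bar> \<le> a} x"
    using x by (simp add: indicator_def)
  finally show ?thesis .
qed

lemma multiaffine_sublevel_insert:
  fixes K :: "'k set"
  assumes "finite K" "k \<notin> K" "lam > 0" "C1 > 0" "C2 > 0"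
    and AC: "multiaffine_anticoncentration K lam C1 C2 C \<delta>" and "C > 0"
    and \<nu>: "\<forall>k. frostman_measure lam C1 C2 (\<nu> k)"
    and Pm: "P \<in> borel_measurable (PiM (insert k K) \<nu>)" and P: "multiaffine (insert k K) P"
    and corner: "\<exists>\<theta>0 \<in> PiE (insert k K) (\<lambda>_. {0, 1}). 1 \<le> \<bar>P \<theta>0\<bar>" and "0 < \<epsilon>" "\<epsilon> \<le> 1"
  defines "M \<equiv> C1 * C2 powr lam"
  shows "emeasure (PiM (insert k K) \<nu>) {\<theta> \<in> space (PiM (insert k K) \<nu>). \<bar>P \<theta>\<bar> \<le> \<epsilon>}
    \<le> ennreal (C1 * \<epsilon> powr (lam / 2) * M ^ card K + M * C * (2 * (1 + C2) * sqrt \<epsilon>) powr \<delta>)"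
proof -
  interpret product_sigma_finite \<nu> using product_sigma_finite_frostman \<nu> \<open>C2 > 0\<close> by blast
  define a where "a = (1 + C2) * sqrt \<epsilon>"
  define D where "D = {x \<in> space (PiM K \<nu>).
    \<bar>P (x(k := 1)) - P (x(k := 0))\<bar> \<le> a \<and> \<bar>P (x(k := 0))\<bar> \<le> a}"
  have "a > 0" unfolding a_def using \<open>C2 > 0\<close> \<open>\<epsilon> > 0\<close> by simp
  have "space (\<nu> k) = UNIV" using \<nu> frostman_measure_space by blast
  then have "(\<lambda>x. P (x(k := c))) \<in> borel_measurable (PiM K \<nu>)" for c
    using measurable_PiM_fun_upd_comp[OF Pm] by simp
  then have Dm: "D \<in> sets (PiM K \<nu>)" unfolding D_def by measurable
  have fiber: "(\<integral>\<^sup>+y. indicator {\<theta> \<in> space (PiM (insert k K) \<nu>). \<bar>P \<theta>\<bar> \<le> \<epsilon>} (x(k := y)) \<partial>\<nu> k)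
      \<le> ennreal (C1 * \<epsilon> powr (lam / 2)) + ennreal M * indicator D x"
    if "x \<in> space (PiM K \<nu>)" for x
    unfolding D_def a_def M_def
    by (rule multiaffine_fiber_sublevel[OF \<nu> \<open>C1 > 0\<close> \<open>C2 > 0\<close> \<open>lam > 0\<close> P \<open>0 < \<epsilon>\<close> \<open>\<epsilon> \<le> 1\<close> that])
  have "emeasure (PiM (insert k K) \<nu>) {\<theta> \<in> space (PiM (insert k K) \<nu>). \<bar>P \<theta>\<bar> \<le> \<epsilon>}
      \<le> ennreal (C1 * \<epsilon> powr (lam / 2)) * emeasure (PiM K \<nu>) (space (PiM K \<nu>))
        + ennreal M * emeasure (PiM K \<nu>) D"
    by (rule emeasure_PiM_insert_le[OF \<open>finite K\<close> \<open>k \<notin> K\<close> _ Dm fiber]) (use Pm in measurable)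
  also have "\<dots> \<le> ennreal (C1 * \<epsilon> powr (lam / 2)) * ennreal (M ^ card K)
      + ennreal M * ennreal (C * (2 * a) powr \<delta>)"
    using emeasure_PiM_frostman_le[of lam C1 C2 \<nu> K] \<nu> assms(1,4,5)
      multiaffine_anticoncentration_coefficients[OF AC \<open>k \<notin> K\<close> \<nu> Pm P corner \<open>a > 0\<close>]
    unfolding D_def M_def by (intro add_mono mult_left_mono) auto
  also have "\<dots> = ennreal (C1 * \<epsilon> powr (lam / 2) * M ^ card K + M * C * (2 * a) powr \<delta>)"
    using \<open>C > 0\<close> assms(4,5) by (simp add: M_def ennreal_mult ennreal_plus[symmetric] mult.assoc)
  finally show ?thesis by (simp only: a_def mult.assoc)
qed

lemma multiaffine_anticoncentration_insert:
  fixes K :: "'k set"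
  assumes "finite K" "k \<notin> K" and lam: "lam > 0" and C1: "C1 > 0" and C2: "C2 > 0"
    and AC: "multiaffine_anticoncentration K lam C1 C2 C \<delta>" and "C > 0" "\<delta> > 0"
  defines "M \<equiv> C1 * C2 powr lam"
  shows "multiaffine_anticoncentration (insert k K) lam C1 C2
     (M ^ Suc (card K) + C1 * M ^ card K + M * C * (2 * (1 + C2)) powr \<delta>) (min (lam / 2) (\<delta> / 2))"
    (is "multiaffine_anticoncentration _ _ _ _ ?C ?\<delta>")
  unfolding multiaffine_anticoncentration_def
proof (intro allI impI)
  fix \<nu> :: "'k \<Rightarrow> real measure" and P :: "('k \<Rightarrow> real) \<Rightarrow> real" and \<epsilon> :: real
  assume \<nu>: "\<forall>k. frostman_measure lam C1 C2 (\<nu> k)"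
    and Pm: "P \<in> borel_measurable (PiM (insert k K) \<nu>)" and P: "multiaffine (insert k K) P"
    and corner: "\<exists>\<theta>0 \<in> PiE (insert k K) (\<lambda>_. {0, 1}). 1 \<le> \<bar>P \<theta>0\<bar>" and "\<epsilon> > 0"
  have "M > 0" unfolding M_def using C1 C2 by simp
  show "emeasure (PiM (insert k K) \<nu>) {\<theta> \<in> space (PiM (insert k K) \<nu>). \<bar>P \<theta>\<bar> \<le> \<epsilon>}
      \<le> ennreal (?C * \<epsilon> powr ?\<delta>)"
  proof (cases "\<epsilon> < 1")
    case False
    have "M ^ card (insert k K) \<le> ?C"
      using \<open>finite K\<close> \<open>k \<notin> K\<close> \<open>M > 0\<close> \<open>C > 0\<close> C1 by simp
    then show ?thesis
      using \<nu> C1 C2 \<open>finite K\<close> False \<open>\<delta> > 0\<close> lam unfolding M_def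
      by (intro emeasure_PiM_frostman_le_powr) auto
  next
    case True
    have "\<epsilon> powr (lam / 2) \<le> \<epsilon> powr ?\<delta>" "\<epsilon> powr (\<delta> / 2) \<le> \<epsilon> powr ?\<delta>"
      using True \<open>\<epsilon> > 0\<close> by (auto intro!: powr_mono')
    moreover have "(2 * (1 + C2) * sqrt \<epsilon>) powr \<delta> = (2 * (1 + C2)) powr \<delta> * \<epsilon> powr (\<delta> / 2)"
      using \<open>\<epsilon> > 0\<close> C2 by (simp add: powr_mult powr_half_sqrt[symmetric] powr_powr)
    ultimately have "C1 * \<epsilon> powr (lam / 2) * M ^ card K \<le> C1 * M ^ card K * \<epsilon> powr ?\<delta>"
      and "M * C * (2 * (1 + C2) * sqrt \<epsilon>) powr \<delta> \<le> M * C * (2 * (1 + C2)) powr \<delta> * \<epsilon> powr ?\<delta>"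
      using \<open>M > 0\<close> \<open>C > 0\<close> C1 by (simp_all add: mult_left_mono)
    moreover have "0 \<le> M ^ Suc (card K) * \<epsilon> powr ?\<delta>" using \<open>M > 0\<close> by simp
    ultimately have bound: "C1 * \<epsilon> powr (lam / 2) * M ^ card K
        + M * C * (2 * (1 + C2) * sqrt \<epsilon>) powr \<delta> \<le> ?C * \<epsilon> powr ?\<delta>"
      by (simp add: algebra_simps)
    have "emeasure (PiM (insert k K) \<nu>) {\<theta> \<in> space (PiM (insert k K) \<nu>). \<bar>P \<theta>\<bar> \<le> \<epsilon>}
        \<le> ennreal (C1 * \<epsilon> powr (lam / 2) * M ^ card K + M * C * (2 * (1 + C2) * sqrt \<epsilon>) powr \<delta>)"
      using multiaffine_sublevel_insert[OF assms(1-7) \<nu> Pm P corner \<open>\<epsilon> > 0\<close>] True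
      unfolding M_def by simp
    also have "\<dots> \<le> ennreal (?C * \<epsilon> powr ?\<delta>)" using bound by (rule ennreal_leI)
    finally show ?thesis .
  qed
qed

lemma multiaffine_anticoncentration_exists:
  fixes K :: "'k set"
  assumes "finite K" "lam > 0" "C1 > 0" "C2 > 0"
  shows "\<exists>C > 0. \<exists>\<delta> > 0. multiaffine_anticoncentration K lam C1 C2 C \<delta>"
  using assms(1)
proof (induction K rule: finite_induct)
  case empty
  show ?case
    using multiaffine_anticoncentration_empty[OF assms(3,4), of lam] by (intro exI[of _ 1] conjI) auto
next
  case (insert k K)
  then obtain C \<delta> where "C > 0" "\<delta> > 0" and AC: "multiaffine_anticoncentration K lam C1 C2 C \<delta>"
    by blast
  have "C1 * C2 powr lam > 0" using assms by simp
  with \<open>C > 0\<close> \<open>\<delta> > 0\<close> assms show ?case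
    using multiaffine_anticoncentration_insert[OF insert(1,2) assms(2-4) AC \<open>C > 0\<close> \<open>\<delta> > 0\<close>]
    by (intro exI conjI) (auto intro!: add_pos_nonneg)
qed
lemma det_mat_col_expansion:
  fixes g :: "nat \<Rightarrow> 'a :: comm_ring_1"
  assumes "k < n"
  shows "det (mat n n (\<lambda>(r, c). if c = k then g r else f c r)) =
    (\<Sum>p | p permutes {0..<n}. signof p * (g (p k) * (\<Prod>j \<in> {..<n} - {k}. f j (p j))))"
proof -
  have "det (mat n n (\<lambda>(r, c). if c = k then g r else f c r)) =
      (\<Sum>p | p permutes {0..<n}. signof p *
        (\<Prod>j<n. mat n n (\<lambda>(r, c). if c = k then g r else f c r) $$ (p j, j)))"
    by (rule det_col) simp
  also have "\<dots> = (\<Sum>p | p permutes {0..<n}. signof p * (g (p k) * (\<Prod>j \<in> {..<n} - {k}. f j (p j))))"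
  proof (rule sum.cong[OF refl])
    fix p assume "p \<in> {p. p permutes {0..<n}}"
    then have pj: "j < n \<Longrightarrow> p j < n" for j using permutes_in_image[of p "{0..<n}" j] by simp
    have "(\<Prod>j<n. mat n n (\<lambda>(r, c). if c = k then g r else f c r) $$ (p j, j)) =
        (\<Prod>j<n. if j = k then g (p j) else f j (p j))"
      by (rule prod.cong) (auto simp: pj)
    also have "\<dots> = g (p k) * (\<Prod>j \<in> {..<n} - {k}. if j = k then g (p j) else f j (p j))"
      by (subst prod.remove[of _ k]) (use assms in auto)
    also have "\<dots> = g (p k) * (\<Prod>j \<in> {..<n} - {k}. f j (p j))"
      by (intro arg_cong2[where f = "(*)"] prod.cong) auto
    finally show "signof p * (\<Prod>j<n. mat n n (\<lambda>(r, c). if c = k then g r else f c r) $$ (p j, j)) =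
        signof p * (g (p k) * (\<Prod>j \<in> {..<n} - {k}. f j (p j)))" by simp
  qed
  finally show ?thesis .
qed

lemma det_mat_col_affine:
  fixes F Fa Fb :: "nat \<Rightarrow> nat \<Rightarrow> 'a :: comm_ring_1"
  assumes "k < n"
    and same: "\<And>r c. c < n \<Longrightarrow> c \<noteq> k \<Longrightarrow> r < n \<Longrightarrow> Fa c r = F c r \<and> Fb c r = F c r"
    and col: "\<And>r. r < n \<Longrightarrow> F k r = Fa k r + s * Fb k r"
  shows "det (mat n n (\<lambda>(r, c). F c r)) =
    det (mat n n (\<lambda>(r, c). Fa c r)) + s * det (mat n n (\<lambda>(r, c). Fb c r))"
proof -
  have eqs: "mat n n (\<lambda>(r, c). F c r) =
      mat n n (\<lambda>(r, c). if c = k then Fa k r + s * Fb k r else F c r)"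
    "mat n n (\<lambda>(r, c). Fa c r) = mat n n (\<lambda>(r, c). if c = k then Fa k r else F c r)"
    "mat n n (\<lambda>(r, c). Fb c r) = mat n n (\<lambda>(r, c). if c = k then Fb k r else F c r)"
    by (auto intro!: eq_matI simp: col same)
  show ?thesis
    unfolding eqs det_mat_col_expansion[OF \<open>k < n\<close>] sum_distrib_left sum.distrib[symmetric]
    by (simp add: algebra_simps)
qed

lemma det_mat_permute_cols:
  fixes f :: "nat \<Rightarrow> nat \<Rightarrow> 'a :: comm_ring_1"
  assumes p: "\<pi> permutes {0..<n}"
  shows "det (mat n n (\<lambda>(r, c). f (\<pi> c) r)) = signof \<pi> * det (mat n n (\<lambda>(r, c). f c r))"
proof -
  let ?A = "mat n n (\<lambda>(r, c). f c r)"
  have pj: "j < n \<Longrightarrow> \<pi> j < n" for j using permutes_in_image[OF p, of j] by simp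
  have "det (mat n n (\<lambda>(i, j). transpose_mat ?A $$ (\<pi> i, j))) = signof \<pi> * det (transpose_mat ?A)"
    by (rule det_permute_rows[OF _ p]) simp
  also have "det (transpose_mat ?A) = det ?A" by (rule det_transpose[where n = n]) simp
  also have "mat n n (\<lambda>(i, j). transpose_mat ?A $$ (\<pi> i, j)) =
      transpose_mat (mat n n (\<lambda>(r, c). f (\<pi> c) r))"
    by (rule eq_matI) (auto simp: pj)
  also have "det (transpose_mat (mat n n (\<lambda>(r, c). f (\<pi> c) r))) = det (mat n n (\<lambda>(r, c). f (\<pi> c) r))"
    by (rule det_transpose[where n = n]) simp
  finally show ?thesis .
qed

lemma abs_det_mat_cols_reorder:
  fixes f :: "nat \<Rightarrow> nat \<Rightarrow> real"
  assumes "distinct xs" "distinct ys" "set xs = set ys" "length ys = n"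
  shows "\<bar>det (mat n n (\<lambda>(r, c). f (xs ! c) r))\<bar> = \<bar>det (mat n n (\<lambda>(r, c). f (ys ! c) r))\<bar>"
proof -
  have "mset xs = mset ys" using assms set_eq_iff_mset_eq_distinct by blast
  then obtain \<pi> where \<pi>: "\<pi> permutes {..<length ys}" "permute_list \<pi> ys = xs"
    by (rule mset_eq_permutation)
  have "mat n n (\<lambda>(r, c). f (xs ! c) r) = mat n n (\<lambda>(r, c). f (ys ! \<pi> c) r)"
    using permute_list_nth[OF \<pi>(1)] \<pi>(2) assms(4) by (auto intro!: eq_matI)
  moreover have "\<pi> permutes {0..<n}" using \<pi>(1) assms(4) by (simp add: atLeast0LessThan)
  moreover have "\<bar>(signof \<pi> :: real)\<bar> = 1" by (cases \<pi> rule: sign_cases) auto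
  ultimately show ?thesis using det_mat_permute_cols[of \<pi> n "\<lambda>c r. f (ys ! c) r"] by (simp add: abs_mult)
qed

text \<open>The determinant is affine in each coefficient s c, and an affine function t \<mapsto> U + t D
  satisfies 2 |U + t D| \<ge> |D| for t = 0 or t = 1.\<close>

lemma det_mat_vertex_bound:
  fixes u w :: "nat \<Rightarrow> nat \<Rightarrow> real"
  assumes "finite C" "C \<subseteq> {0..<n}"
  shows "\<exists>s. (\<forall>c. s c \<in> {0, 1}) \<and> \<bar>det (mat n n (\<lambda>(r, c). w c r))\<bar> \<le>
     2 ^ card C * \<bar>det (mat n n (\<lambda>(r, c). if c \<in> C then u c r + s c * w c r else w c r))\<bar>"
  using assms
proof (induction C rule: finite_induct)
  case empty
  show ?case by (intro exI[of _ "\<lambda>_. 0"]) simp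
next
  case (insert c0 C)
  then obtain s where s: "\<forall>c. s c \<in> {0, 1}"
    "\<bar>det (mat n n (\<lambda>(r, c). w c r))\<bar> \<le>
       2 ^ card C * \<bar>det (mat n n (\<lambda>(r, c). if c \<in> C then u c r + s c * w c r else w c r))\<bar>"
    by auto
  define D where "D = det (mat n n (\<lambda>(r, c). if c \<in> C then u c r + s c * w c r else w c r))"
  define G where "G t = det (mat n n (\<lambda>(r, c).
    if c \<in> insert c0 C then u c r + (s(c0 := t)) c * w c r else w c r))" for t
  define U where "U = det (mat n n (\<lambda>(r, c).
    if c = c0 then u c0 r else if c \<in> C then u c r + s c * w c r else w c r))"
  have G: "G t = U + t * D" for t
    unfolding G_def U_def D_def by (rule det_mat_col_affine[where k = c0]) (use insert in auto)
  have "\<bar>D\<bar> \<le> 2 * \<bar>G 0\<bar> \<or> \<bar>D\<bar> \<le> 2 * \<bar>G 1\<bar>"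
    using G[of 0] G[of 1] by linarith
  then obtain t where t: "t \<in> {0, 1}" "\<bar>D\<bar> \<le> 2 * \<bar>G t\<bar>" by blast
  have "\<bar>det (mat n n (\<lambda>(r, c). w c r))\<bar> \<le> 2 ^ card (insert c0 C) * \<bar>G t\<bar>"
    using s(2) t(2) insert(1,2) unfolding D_def by (auto intro: order.trans)
  moreover have "\<forall>c. (s(c0 := t)) c \<in> {0, 1}" using s(1) t(1) by auto
  ultimately show ?case unfolding G_def by blast
qed
lemma borel_measurable_det_mat:
  fixes f :: "'a \<Rightarrow> nat \<Rightarrow> nat \<Rightarrow> real"
  assumes "\<And>r c. r < n \<Longrightarrow> c < n \<Longrightarrow> (\<lambda>x. f x r c) \<in> borel_measurable M"
  shows "(\<lambda>x. det (mat n n (\<lambda>(r, c). f x r c))) \<in> borel_measurable M"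
proof -
  have "det (mat n n (\<lambda>(r, c). f x r c)) =
      (\<Sum>\<pi> \<in> {\<pi>. \<pi> permutes {0..<n}}. signof \<pi> * (\<Prod>i = 0..<n. f x i (\<pi> i)))" for x
  proof -
    have "det (mat n n (\<lambda>(r, c). f x r c)) = (\<Sum>\<pi> \<in> {\<pi>. \<pi> permutes {0..<n}}.
        signof \<pi> * (\<Prod>i = 0..<n. mat n n (\<lambda>(r, c). f x r c) $$ (i, \<pi> i)))"
      by (rule det_def') simp
    also have "\<dots> = (\<Sum>\<pi> \<in> {\<pi>. \<pi> permutes {0..<n}}. signof \<pi> * (\<Prod>i = 0..<n. f x i (\<pi> i)))"
      by (intro sum.cong refl arg_cong2[where f = "(*)"] prod.cong) (auto simp: permutes_in_image)
    finally show ?thesis .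
  qed
  moreover have "(\<lambda>x. \<Sum>\<pi> \<in> {\<pi>. \<pi> permutes {0..<n}}. signof \<pi> * (\<Prod>i = 0..<n. f x i (\<pi> i)))
      \<in> borel_measurable M"
  proof (intro borel_measurable_sum borel_measurable_times borel_measurable_const borel_measurable_prod)
    fix \<pi> i assume "\<pi> \<in> {\<pi>. \<pi> permutes {0..<n}}" "i \<in> {0..<n}"
    then show "(\<lambda>x. f x i (\<pi> i)) \<in> borel_measurable M" using assms permutes_in_image by fastforce
  qed
  ultimately show ?thesis by simp
qed

lemma ztheta_fun_upd:
  assumes "i \<in> {1..p}" "j \<in> {1..q}"
  shows "ztheta p q (\<theta>((i, j) := y)) z m r =
    ztheta p q (\<theta>((i, j) := 0)) z m r + (if m = i then y * z (p + j) r else 0)"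
proof (cases "m = i")
  case True
  have "(\<Sum>j' = 1..q. (\<theta>((i, j) := t)) (i, j') * z (p + j') r) =
      t * z (p + j) r + (\<Sum>j' \<in> {1..q} - {j}. \<theta> (i, j') * z (p + j') r)" for t
    by (subst sum.remove[of _ j]) (use assms in \<open>auto intro!: sum.cong\<close>)
  then show ?thesis using True assms by (simp add: ztheta_def)
next
  case False
  then have "(\<Sum>j' = 1..q. (\<theta>((i, j) := t)) (m, j') * z (p + j') r) =
      (\<Sum>j' = 1..q. \<theta> (m, j') * z (p + j') r)" for t
    by (intro sum.cong) auto
  then show ?thesis using False by (simp add: ztheta_def)
qed

lemma borel_measurable_ztheta:
  assumes "\<And>k. k \<in> {1..p} \<times> {1..q} \<Longrightarrow> sets (M k) = sets borel"
  shows "(\<lambda>\<theta>. ztheta p q \<theta> z m r) \<in> borel_measurable (PiM ({1..p} \<times> {1..q}) M)"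
proof (cases "1 \<le> m \<and> m \<le> p")
  case True
  have "(\<lambda>\<theta>. \<theta> (m, j)) \<in> borel_measurable (PiM ({1..p} \<times> {1..q}) M)" if "j \<in> {1..q}" for j
    using measurable_component_singleton[of "(m, j)" "{1..p} \<times> {1..q}" M] True that assms
    by (simp cong: measurable_cong_sets)
  then have "(\<lambda>\<theta>. z m r + (\<Sum>j = 1..q. \<theta> (m, j) * z (p + j) r))
      \<in> borel_measurable (PiM ({1..p} \<times> {1..q}) M)"
    by (intro borel_measurable_add borel_measurable_const borel_measurable_sum borel_measurable_times)
  then show ?thesis using True by (simp add: ztheta_def)
next
  case False
  then have "ztheta p q \<theta> z m = z m" for \<theta> by (auto simp: ztheta_def)
  then show ?thesis by simp
qed

lemma borel_measurable_zdet_ztheta: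
  assumes "\<And>k. k \<in> {1..p} \<times> {1..q} \<Longrightarrow> sets (M k) = sets borel"
  shows "(\<lambda>\<theta>. zdet l (ztheta p q \<theta> z) I) \<in> borel_measurable (PiM ({1..p} \<times> {1..q}) M)"
  unfolding zdet_def
  by (rule borel_measurable_det_mat[where f = "\<lambda>\<theta> r c. ztheta p q \<theta> z (sorted_list_of_set I ! c) r"])
    (rule borel_measurable_ztheta[OF assms])

lemma multiaffine_zdet_ztheta:
  assumes "finite I" "card I = l"
  shows "multiaffine ({1..p} \<times> {1..q}) (\<lambda>\<theta>. zdet l (ztheta p q \<theta> z) I)"
proof (rule multiaffineI)
  fix k \<theta> assume "k \<in> {1..p} \<times> {1..q}"
  then obtain i j where ij: "k = (i, j)" "i \<in> {1..p}" "j \<in> {1..q}" by auto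
  define xs where "xs = sorted_list_of_set I"
  have xs: "length xs = l" "distinct xs" using assms by (auto simp: xs_def)
  define col where "col t c r = ztheta p q (\<theta>(k := t)) z (xs ! c) r" for t c r
  have zdet_col: "zdet l (ztheta p q (\<theta>(k := t)) z) I = det (mat l l (\<lambda>(r, c). col t c r))" for t
    unfolding zdet_def xs_def col_def ..
  have col: "col t c r = col 0 c r + (if xs ! c = i then t * z (p + j) r else 0)" for t c r
    unfolding col_def ij(1) by (rule ztheta_fun_upd[OF ij(2,3)])
  show "\<exists>W. \<forall>t. zdet l (ztheta p q (\<theta>(k := t)) z) I = zdet l (ztheta p q (\<theta>(k := 0)) z) I + t * W"
  proof (cases "i \<in> set xs")
    case True
    then obtain c0 where c0: "c0 < l" "xs ! c0 = i" by (metis in_set_conv_nth xs(1))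
    have "xs ! c \<noteq> i" if "c < l" "c \<noteq> c0" for c
      using c0 xs that nth_eq_iff_index_eq by metis
    then have "det (mat l l (\<lambda>(r, c). col t c r)) = det (mat l l (\<lambda>(r, c). col 0 c r)) +
        t * det (mat l l (\<lambda>(r, c). if c = c0 then z (p + j) r else col 0 c r))" for t
      by (intro det_mat_col_affine[OF c0(1)]) (auto simp: col[of t] c0(2))
    then show ?thesis unfolding zdet_col by blast
  next
    case False
    then have "mat l l (\<lambda>(r, c). col t c r) = mat l l (\<lambda>(r, c). col 0 c r)" for t
      by (auto intro!: eq_matI simp: col[of t] xs(1) nth_mem)
    then show ?thesis unfolding zdet_col by (metis add.right_neutral mult_zero_right)
  qed
qed
lemma bij_betw_exchange:
  assumes "finite A" "finite B" "card A = card B" "A \<inter> J = {}" "B \<subseteq> J"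
  shows "\<exists>g. bij_betw g ((J - B) \<union> A) J \<and> (\<forall>i \<in> J - B. g i = i) \<and> (\<forall>i \<in> A. g i \<in> B)"
proof -
  obtain h where h: "bij_betw h A B" using finite_same_card_bij[OF assms(1-3)] by blast
  define g where "g i = (if i \<in> A then h i else i)" for i
  have "bij_betw g A B" using h by (rule bij_betw_cong[THEN iffD1, rotated]) (simp add: g_def)
  moreover have "bij_betw g (J - B) (J - B)"
    by (rule bij_betw_cong[THEN iffD1, rotated, of id]) (use assms(4) in \<open>auto simp: g_def\<close>)
  ultimately have "bij_betw g ((J - B) \<union> A) ((J - B) \<union> B)"
    using assms(4) by (intro bij_betw_combine) auto
  moreover have "(J - B) \<union> B = J" using assms(5) by auto
  moreover have "\<forall>i \<in> J - B. g i = i" using assms(4) by (auto simp: g_def)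
  moreover have "\<forall>i \<in> A. g i \<in> B" using bij_betwE[OF h] by (simp add: g_def)
  ultimately show ?thesis by auto
qed

text \<open>Trade elements of J beyond p for elements of {1..p} until the first block is as
  full as possible; the trade is recorded by a bijection that moves only the new elements.\<close>

lemma Splus_exchange:
  assumes J: "J \<in> Sset p q l"
  shows "\<exists>I A g. I \<in> Splus p q l \<and> A \<subseteq> I \<inter> {1..p} \<and> bij_betw g I J \<and>
    (\<forall>i \<in> I - A. g i = i) \<and> (\<forall>i \<in> A. g i \<in> {p + 1..p + q})"
proof -
  have Jf: "J \<subseteq> {1..p + q}" "card J = l" "finite J"
    using J finite_subset by (auto simp: Sset_def)
  have "card ((J \<inter> {1..p}) \<union> (J \<inter> {p + 1..p + q})) = card (J \<inter> {1..p}) + card (J \<inter> {p + 1..p + q})"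
    using Jf(3) by (intro card_Un_disjoint) auto
  moreover have "(J \<inter> {1..p}) \<union> (J \<inter> {p + 1..p + q}) = J" using Jf(1) by auto
  ultimately have cJ: "card (J \<inter> {1..p}) + card (J \<inter> {p + 1..p + q}) = l" using Jf(2) by simp
  have cR: "card ({1..p} - J) = p - card (J \<inter> {1..p})"
    using card_Diff_subset_Int[of "{1..p}" J] by (simp add: Int_commute)
  obtain A B where AB: "A \<subseteq> {1..p} - J" "B \<subseteq> J \<inter> {p + 1..p + q}" "card A = card B"
    "card (A \<union> (J \<inter> {1..p})) = min p l"
  proof (cases "l \<le> p")
    case True
    then have "card (J \<inter> {p + 1..p + q}) \<le> card ({1..p} - J)" using cR cJ by simp
    then obtain A where "A \<subseteq> {1..p} - J" "card A = card (J \<inter> {p + 1..p + q})" "finite A"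
      by (rule obtain_subset_with_card_n)
    moreover have "card (A \<union> (J \<inter> {1..p})) = card A + card (J \<inter> {1..p})"
      using calculation(1) by (intro card_Un_disjoint) (auto intro: finite_subset)
    ultimately show thesis using that[of A "J \<inter> {p + 1..p + q}"] True cJ by simp
  next
    case False
    then have "p - card (J \<inter> {1..p}) \<le> card (J \<inter> {p + 1..p + q})" using cJ by simp
    then obtain B where "B \<subseteq> J \<inter> {p + 1..p + q}" "card B = p - card (J \<inter> {1..p})"
      by (rule obtain_subset_with_card_n)
    moreover have "({1..p} - J) \<union> (J \<inter> {1..p}) = {1..p}" by auto
    ultimately show thesis using that[of "{1..p} - J" B] False cR by simp
  qed
  define I where "I = (J - B) \<union> A"
  have "finite A" using AB(1) by (rule finite_subset) simp
  moreover have "finite B" using finite_subset[OF AB(2)] Jf(3) by simp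
  ultimately obtain g where g: "bij_betw g I J" "\<forall>i \<in> J - B. g i = i" "\<forall>i \<in> A. g i \<in> B"
    using bij_betw_exchange[of A B J] AB(1-3) unfolding I_def by blast
  have "I \<in> Splus p q l"
  proof -
    have "I \<subseteq> {1..p + q}" unfolding I_def using AB(1) Jf(1) by auto
    moreover have "card I = l" using bij_betw_same_card[OF g(1)] Jf(2) by simp
    moreover have "I \<inter> {1..p} = A \<union> (J \<inter> {1..p})" unfolding I_def using AB(1,2) by auto
    ultimately show ?thesis using AB(4) by (simp add: Splus_def Sset_def)
  qed
  moreover have "A \<subseteq> I \<inter> {1..p}" "I - A = J - B" "\<forall>i \<in> A. g i \<in> {p + 1..p + q}"
    unfolding I_def using AB(1,2) g(3) by auto
  ultimately show ?thesis using g(1,2) by (intro exI[of _ I] exI[of _ A] exI[of _ g]) simp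
qed

lemma ztheta_exchange:
  fixes g :: "nat \<Rightarrow> nat" and \<sigma> :: "nat \<Rightarrow> real"
  assumes A: "A \<subseteq> {1..p}" and g: "\<And>i. i \<in> A \<Longrightarrow> g i \<in> {p + 1..p + q}"
  defines "\<theta> \<equiv> restrict (\<lambda>(i, j). if i \<in> A \<and> j = g i - p then \<sigma> i else 0) ({1..p} \<times> {1..q})"
  shows "ztheta p q \<theta> z i = (if i \<in> A then (\<lambda>r. z i r + \<sigma> i * z (g i) r) else z i)"
proof (cases "i \<in> A")
  case True
  then have i: "1 \<le> i \<and> i \<le> p" and gi: "g i - p \<in> {1..q}" "p + (g i - p) = g i"
    using A g[OF True] by auto
  have "(\<Sum>j = 1..q. \<theta> (i, j) * z (p + j) r) = (\<Sum>j = 1..q. if j = g i - p then \<sigma> i * z (p + j) r else 0)"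
    for r using True i by (intro sum.cong) (auto simp: \<theta>_def)
  then show ?thesis using True i gi by (simp add: ztheta_def)
next
  case False
  then have "(\<Sum>j = 1..q. \<theta> (i, j) * z (p + j) r) = 0" if "1 \<le> i \<and> i \<le> p" for r
    using that by (intro sum.neutral) (auto simp: \<theta>_def)
  then show ?thesis using False by (auto simp: ztheta_def fun_eq_iff)
qed
lemma abs_zdet_bij_betw:
  assumes g: "bij_betw g I J" and I: "finite I" "card I = l"
  shows "\<bar>det (mat l l (\<lambda>(r, c). z (g (sorted_list_of_set I ! c)) r))\<bar> = \<bar>zdet l z J\<bar>"
proof -
  let ?xs = "sorted_list_of_set I" and ?ys = "sorted_list_of_set J"
  have J: "finite J" "card J = l"
    using bij_betw_finite[OF g] bij_betw_same_card[OF g] I by simp_all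
  have "distinct (map g ?xs)" using I bij_betw_imp_inj_on[OF g] by (simp add: distinct_map)
  moreover have "set (map g ?xs) = set ?ys" using g I J by (simp add: bij_betw_def)
  moreover have "mat l l (\<lambda>(r, c). z (g (?xs ! c)) r) = mat l l (\<lambda>(r, c). z (map g ?xs ! c) r)"
    using I by (auto intro!: eq_matI)
  ultimately show ?thesis
    using abs_det_mat_cols_reorder[of "map g ?xs" ?ys l z] J by (simp add: zdet_def)
qed

lemma Splus_vertex_bound:
  assumes J: "J \<in> Sset p q l" and zJ: "\<bar>zdet l z J\<bar> = 1"
  shows "\<exists>I \<in> Splus p q l. \<exists>\<theta>0 \<in> PiE ({1..p} \<times> {1..q}) (\<lambda>_. {0, 1}).
    1 \<le> 2 ^ l * \<bar>zdet l (ztheta p q \<theta>0 z) I\<bar>"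
proof -
  obtain I A g where I: "I \<in> Splus p q l" and A: "A \<subseteq> I \<inter> {1..p}" and g: "bij_betw g I J"
      "\<forall>i \<in> I - A. g i = i" "\<forall>i \<in> A. g i \<in> {p + 1..p + q}"
    using Splus_exchange[OF J] by blast
  have fI: "finite I" "card I = l"
    using I finite_subset[of I "{1..p + q}"] by (auto simp: Splus_def Sset_def)
  define xs where "xs = sorted_list_of_set I"
  have xs: "distinct xs" "length xs = l" "set xs = I" using fI by (auto simp: xs_def)
  define C where "C = {c. c < l \<and> xs ! c \<in> A}"
  define u where "u c = z (xs ! c)" for c
  define w where "w c = z (g (xs ! c))" for c
  have "finite C" "C \<subseteq> {0..<l}" by (auto simp: C_def)
  then obtain s where s: "\<forall>c. s c \<in> {0, 1}" "\<bar>det (mat l l (\<lambda>(r, c). w c r))\<bar> \<le>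
      2 ^ card C * \<bar>det (mat l l (\<lambda>(r, c). if c \<in> C then u c r + s c * w c r else w c r))\<bar>"
    using det_mat_vertex_bound[of C l w u] by blast
  have W: "\<bar>det (mat l l (\<lambda>(r, c). w c r))\<bar> = 1"
    using abs_zdet_bij_betw[OF g(1) fI, of z] zJ by (simp add: w_def xs_def)
  define pos where "pos i = (THE c. c < l \<and> xs ! c = i)" for i
  have pos: "pos (xs ! c) = c" if "c < l" for c
    unfolding pos_def by (rule the_equality) (use that xs nth_eq_iff_index_eq in auto)
  define \<theta>0 where
    "\<theta>0 = restrict (\<lambda>(i, j). if i \<in> A \<and> j = g i - p then s (pos i) else 0) ({1..p} \<times> {1..q})"
  have \<theta>0: "\<theta>0 \<in> PiE ({1..p} \<times> {1..q}) (\<lambda>_. {0, 1})"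
    using s(1) by (auto simp: \<theta>0_def PiE_iff)
  have "ztheta p q \<theta>0 z (xs ! c) r = (if c \<in> C then u c r + s c * w c r else w c r)"
    if "c < l" for c r
  proof -
    have "ztheta p q \<theta>0 z (xs ! c) =
        (if xs ! c \<in> A then (\<lambda>r. z (xs ! c) r + s (pos (xs ! c)) * z (g (xs ! c)) r) else z (xs ! c))"
      unfolding \<theta>0_def using A g(3) by (intro ztheta_exchange) auto
    moreover have "xs ! c \<in> I" using that xs by auto
    ultimately show ?thesis using that g(2) pos by (auto simp: C_def u_def w_def)
  qed
  then have "mat l l (\<lambda>(r, c). if c \<in> C then u c r + s c * w c r else w c r) =
      mat l l (\<lambda>(r, c). ztheta p q \<theta>0 z (xs ! c) r)"
    by (auto intro!: eq_matI)
  then have "1 \<le> 2 ^ card C * \<bar>zdet l (ztheta p q \<theta>0 z) I\<bar>"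
    using s(2) W by (simp add: zdet_def xs_def)
  also have "\<dots> \<le> 2 ^ l * \<bar>zdet l (ztheta p q \<theta>0 z) I\<bar>"
    using card_mono[OF finite_atLeastLessThan \<open>C \<subseteq> {0..<l}\<close>]
    by (intro mult_right_mono power_increasing) auto
  finally show ?thesis using I \<theta>0 by blast
qed

lemma finite_Sset: "finite (Sset p q l)"
  by (rule finite_subset[of _ "Pow {1..p + q}"]) (auto simp: Sset_def)

lemma Sset_nonempty:
  assumes "l \<le> p + q"
  shows "Sset p q l \<noteq> {}"
proof -
  obtain T where "T \<subseteq> {1..p + q}" "card T = l"
    using obtain_subset_with_card_n[of l "{1..p + q}"] assms by auto
  then show ?thesis by (auto simp: Sset_def)
qed

lemma zdet_Splus_sublevel:
  assumes AC: "multiaffine_anticoncentration ({1..p} \<times> {1..q}) lam C1 C2 C \<delta>"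
    and \<nu>: "\<forall>k. frostman_measure lam C1 C2 (\<nu> k)"
    and J: "J \<in> Sset p q l" "\<bar>zdet l z J\<bar> = 1" and "\<epsilon> > 0"
  shows "emeasure (PiM ({1..p} \<times> {1..q}) \<nu>) {\<theta> \<in> space (PiM ({1..p} \<times> {1..q}) \<nu>).
      Max ((\<lambda>I. \<bar>zdet l (ztheta p q \<theta> z) I\<bar>) ` Splus p q l) \<le> \<epsilon>}
    \<le> ennreal (C * (2 ^ l * \<epsilon>) powr \<delta>)"
proof -
  let ?K = "{1..p} \<times> {1..q}"
  obtain I \<theta>0 where I: "I \<in> Splus p q l" and \<theta>0: "\<theta>0 \<in> PiE ?K (\<lambda>_. {0, 1})"
    "1 \<le> 2 ^ l * \<bar>zdet l (ztheta p q \<theta>0 z) I\<bar>"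
    using Splus_vertex_bound[OF J] by blast
  define P where "P \<theta> = 2 ^ l * zdet l (ztheta p q \<theta> z) I" for \<theta>
  have "finite I" "card I = l"
    using I finite_subset[of I "{1..p + q}"] by (auto simp: Splus_def Sset_def)
  then have P: "multiaffine ?K P"
    using multiaffine_lincomb[OF multiaffine_zdet_ztheta multiaffine_zdet_ztheta, where a = "2 ^ l" and b = 0]
    unfolding P_def by simp
  have "sets (\<nu> k) = sets borel" for k
    using \<nu>[rule_format, of k] by (simp add: frostman_measure_def)
  then have Pm: "P \<in> borel_measurable (PiM ?K \<nu>)"
    unfolding P_def by (intro borel_measurable_times borel_measurable_const borel_measurable_zdet_ztheta)
  have "finite (Splus p q l)"
    using finite_Sset by (rule finite_subset[rotated]) (auto simp: Splus_def)
  then have "{\<theta> \<in> space (PiM ?K \<nu>). Max ((\<lambda>I. \<bar>zdet l (ztheta p q \<theta> z) I\<bar>) ` Splus p q l) \<le> \<epsilon>}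
      \<subseteq> {\<theta> \<in> space (PiM ?K \<nu>). \<bar>P \<theta>\<bar> \<le> 2 ^ l * \<epsilon>}"
    using I by (auto simp: P_def abs_mult dest: order.trans[rotated, OF _ Max_ge])
  then have "emeasure (PiM ?K \<nu>) {\<theta> \<in> space (PiM ?K \<nu>).
        Max ((\<lambda>I. \<bar>zdet l (ztheta p q \<theta> z) I\<bar>) ` Splus p q l) \<le> \<epsilon>}
      \<le> emeasure (PiM ?K \<nu>) {\<theta> \<in> space (PiM ?K \<nu>). \<bar>P \<theta>\<bar> \<le> 2 ^ l * \<epsilon>}"
    using Pm by (intro emeasure_mono) measurable
  also have "\<dots> \<le> ennreal (C * (2 ^ l * \<epsilon>) powr \<delta>)"
  proof (rule AC[unfolded multiaffine_anticoncentration_def, rule_format])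
    show "\<exists>\<theta>0 \<in> PiE ?K (\<lambda>_. {0, 1}). 1 \<le> \<bar>P \<theta>0\<bar>"
      using \<theta>0 by (auto simp: P_def abs_mult)
  qed (use \<nu> Pm P \<open>\<epsilon> > 0\<close> in auto)
  finally show ?thesis .
qed

theorem lemma3p2:
  fixes p q l :: nat and F :: "'f set"
    and \<nu> :: "'f \<Rightarrow> nat \<Rightarrow> nat \<Rightarrow> real measure"
    and lam C1 C2 :: real
  assumes "l \<le> p + q"
    and "lam > 0" and "C1 > 0" and "C2 > 0"
    and borel: "\<And>\<rho> i j. \<rho> \<in> F \<Longrightarrow> i \<in> {1..p} \<Longrightarrow> j \<in> {1..q} \<Longrightarrow>
        sets (\<nu> \<rho> i j) = sets borel"
    and ball: "\<And>\<rho> i j x y. \<rho> \<in> F \<Longrightarrow> i \<in> {1..p} \<Longrightarrow> j \<in> {1..q} \<Longrightarrow> y > 0 \<Longrightarrow>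
        emeasure (\<nu> \<rho> i j) {x - y..x + y} \<le> ennreal (C1 * y powr lam)"
    and supp: "\<And>\<rho> i j. \<rho> \<in> F \<Longrightarrow> i \<in> {1..p} \<Longrightarrow> j \<in> {1..q} \<Longrightarrow>
        emeasure (\<nu> \<rho> i j) (UNIV - {-C2..C2}) = 0"
  shows "\<exists>C3 > 0. \<exists>\<delta> > 0. \<forall>z :: nat \<Rightarrow> nat \<Rightarrow> real.
      Max ((\<lambda>I. \<bar>zdet l z I\<bar>) ` Sset p q l) = 1 \<longrightarrow>
      (\<forall>\<rho> \<in> F. \<forall>\<epsilon> :: real. 0 < \<epsilon> \<and> \<epsilon> < 1 \<longrightarrow>
        emeasure (PiM ({1..p} \<times> {1..q}) (\<lambda>(i, j). \<nu> \<rho> i j))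
          {\<theta> \<in> space (PiM ({1..p} \<times> {1..q}) (\<lambda>(i, j). \<nu> \<rho> i j)).
             Max ((\<lambda>I. \<bar>zdet l (ztheta p q \<theta> z) I\<bar>) ` Splus p q l) \<le> \<epsilon>}
        \<le> ennreal (C3 * \<epsilon> powr \<delta>))"
proof -
  let ?K = "{1..p} \<times> {1..q}"
  obtain C \<delta> where "C > 0" "\<delta> > 0" and AC: "multiaffine_anticoncentration ?K lam C1 C2 C \<delta>"
    using multiaffine_anticoncentration_exists[of ?K lam C1 C2] assms(2-4) by auto
  have "emeasure (PiM ?K (\<lambda>(i, j). \<nu> \<rho> i j)) {\<theta> \<in> space (PiM ?K (\<lambda>(i, j). \<nu> \<rho> i j)).
        Max ((\<lambda>I. \<bar>zdet l (ztheta p q \<theta> z) I\<bar>) ` Splus p q l) \<le> \<epsilon>}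
      \<le> ennreal (C * (2 ^ l) powr \<delta> * \<epsilon> powr \<delta>)"
    if z: "Max ((\<lambda>I. \<bar>zdet l z I\<bar>) ` Sset p q l) = 1" and \<rho>: "\<rho> \<in> F" and "0 < \<epsilon>" for z \<rho> \<epsilon>
  proof -
    obtain J where J: "J \<in> Sset p q l" "\<bar>zdet l z J\<bar> = 1"
      using Max_in[of "(\<lambda>I. \<bar>zdet l z I\<bar>) ` Sset p q l"] finite_Sset Sset_nonempty[OF assms(1)] z
      by auto
    \<comment> \<open>The factors outside the index set are irrelevant; replace them by Frostman measures.\<close>
    define \<nu>' where "\<nu>' k = (if k \<in> ?K then \<nu> \<rho> (fst k) (snd k) else null_measure borel)" for k
    have "\<forall>k. frostman_measure lam C1 C2 (\<nu>' k)"
      using borel[OF \<rho>] ball[OF \<rho>] supp[OF \<rho>] by (auto simp: \<nu>'_def frostman_measure_def)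
    moreover have "PiM ?K \<nu>' = PiM ?K (\<lambda>(i, j). \<nu> \<rho> i j)" by (rule PiM_cong) (auto simp: \<nu>'_def)
    ultimately show ?thesis
      using zdet_Splus_sublevel[OF AC _ J \<open>0 < \<epsilon>\<close>, of \<nu>'] \<open>0 < \<epsilon>\<close> by (simp add: powr_mult mult.assoc)
  qed
  then show ?thesis
    using \<open>C > 0\<close> \<open>\<delta> > 0\<close> by (intro exI[of _ "C * (2 ^ l) powr \<delta>"] exI[of _ \<delta>]) auto
qed

end
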